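(* Let $p$ be an odd prime, $q=p^m$, and let $N$ be a positive divisor of $p-1$ with $\gcd(N,\frac{q-1}{p-1})=1$. Let $\theta$ be a primitive $\frac{q-1}{N}$-th root of unity in $\mathbb{F}_q$. Then for any $c\in\mathbb{F}_q^*$, \[\sum_{\lambda\in\mathbb{F}_p^*}\sum_{i=0}^{\frac{q-1}{N}-1}\zeta_p^{\mathrm{Tr}_{q/p}(\lambda c\theta^i)}=-\frac{p-1}{N},\] and for any $a\in\mathbb{F}_q$, \[\sum_{\lambda\in\mathbb{F}_p^*}\sum_{i=0}^{\frac{q-1}{N}-1}\zeta_p^{\mathrm{Tr}_{q/p}(\lambda c\theta^i)}\eta(\lambda a\theta^i)=\frac{p-1}{N}\,\eta(ac)\sum_{x\in\mathbb{F}_q^*}\zeta_p^{\mathrm{Tr}_{q/p}(x)}\eta(x).\]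
   Context: $\zeta_p=e^{2\pi\mathrm{i}/p}$; $\mathrm{Tr}_{q/p}$ is the trace $\mathbb{F}_q\to\mathbb{F}_p$; $\eta$ is the quadratic character of $\mathbb{F}_q$ with $\eta(0)=0$. *)

theory Defs
  imports Complex_Main "HOL-Library.Cardinality" "HOL-Computational_Algebra.Primes"
begin

text \<open>The finite field F_q is modelled as a finite field type 'a with CARD('a) = p^m.
  The prime field F_p is the image of the naturals, of_nat ` {0..<p}.\<close>

definition trace_qp :: "nat \<Rightarrow> nat \<Rightarrow> 'a::field \<Rightarrow> 'a" where
  "trace_qp p m x = (\<Sum>j<m. x ^ (p ^ j))"

definition Fp_rep :: "nat \<Rightarrow> 'a::field \<Rightarrow> nat" where
  "Fp_rep p y = (THE k. k < p \<and> of_nat k = y)"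

definition zeta_pow :: "nat \<Rightarrow> 'a::field \<Rightarrow> complex" where
  "zeta_pow p y = exp (2 * pi * \<i> * of_nat (Fp_rep p y) / of_nat p)"

definition eta :: "'a::field \<Rightarrow> complex" where
  "eta x = (if x = 0 then 0 else if (\<exists>y. y ^ 2 = x) then 1 else -1)"

end

theory Submission
  imports Defs "HOL-Number_Theory.Residues" "HOL-Computational_Algebra.Polynomial"
begin

text \<open>
  Let \<open>H = {x. x ^ (p - 1) = 1}\<close> be the multiplicative group of the prime field and
  \<open>T = {x. x ^ n = 1}\<close>, \<open>n = (q - 1) / N\<close>, the cyclic group generated by \<open>\<theta>\<close>.
  In \<open>\<bbbF>\<^sub>q\<^sup>*\<close> the set of \<open>k\<close>-th roots of unity has exactly \<open>k\<close> elements whenever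
  \<open>k\<close> divides \<open>q - 1\<close>. The coprimality hypothesis gives \<open>lcm (p - 1) n = q - 1\<close> and
  \<open>gcd (p - 1) n = (p - 1) / N\<close>, so the multiplication map \<open>H \<times> T \<rightarrow> \<bbbF>\<^sub>q\<^sup>*\<close> is onto and
  each fibre, a translate of \<open>H \<inter> T\<close>, has \<open>(p - 1) / N\<close> elements. Both double sums
  therefore equal \<open>(p - 1) / N\<close> times a sum over \<open>\<bbbF>\<^sub>q\<^sup>*\<close>. In the first one the complete
  sum of the nontrivial additive character \<open>x \<mapsto> \<zeta>\<^sub>p ^ Tr(c x)\<close> vanishes, leaving \<open>-1\<close>;
  in the second the substitution \<open>x \<mapsto> x / c\<close> and the multiplicativity of \<open>\<eta>\<close>
  (Euler's criterion) pull out the factor \<open>\<eta>(a c)\<close>.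
\<close>

section \<open>Roots of unity in finite fields\<close>

lemma card_field_ge_2: "CARD('a::{field,finite}) \<ge> 2"
  using card_mono[of UNIV "{0, 1::'a}"] by simp

lemma finite_field_power_card_minus_1:
  fixes x :: "'a::{field,finite}"
  assumes "x \<noteq> 0"
  shows "x ^ (CARD('a) - 1) = 1"
proof -
  define G :: "'a monoid" where "G = \<lparr>carrier = UNIV - {0::'a}, mult = (*), one = 1\<rparr>"
  have "\<exists>y \<in> UNIV - {0}. y * z = 1" if "z \<noteq> 0" for z :: 'a
    using that by (intro bexI[of _ "inverse z"]) auto
  then interpret G: group G
    by (intro groupI) (auto simp: G_def)
  have pow: "y [^]\<^bsub>G\<^esub> k = y ^ k" for y :: 'a and k :: nat
    by (induction k) (simp_all add: G_def)
  have "x [^]\<^bsub>G\<^esub> Coset.order G = \<one>\<^bsub>G\<^esub>"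
    by (rule G.pow_order_eq_1) (simp add: G_def assms)
  moreover have "Coset.order G = CARD('a) - 1"
    by (simp add: Coset.order_def G_def card_Diff_subset)
  ultimately have "x ^ (CARD('a) - 1) = \<one>\<^bsub>G\<^esub>"
    by (simp add: pow)
  then show ?thesis
    by (simp add: G_def)
qed

lemma finite_field_power_card: "(x::'a::{field,finite}) ^ CARD('a) = x"
proof -
  obtain k where k: "CARD('a) = Suc k"
    using card_field_ge_2[where 'a='a] by (cases "CARD('a)") auto
  show ?thesis
  proof (cases "x = 0")
    case False
    then show ?thesis
      using finite_field_power_card_minus_1[OF False] by (simp add: k)
  qed (simp add: k)
qed

lemma card_power_eq_le:
  fixes c :: "'a::field"
  assumes "k > 0"
  shows "finite {x. x ^ k = c}" and "card {x. x ^ k = c} \<le> k"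
proof -
  define P where "P = monom 1 k + [:-c:]"
  have "degree P = k"
    using assms by (simp add: P_def degree_add_eq_left degree_monom_eq)
  with assms have "P \<noteq> 0"
    by auto
  have roots: "{x. x ^ k = c} = {x. poly P x = 0}"
    by (simp add: P_def poly_monom)
  show "finite {x. x ^ k = c}"
    unfolding roots using \<open>P \<noteq> 0\<close> by (rule poly_roots_finite)
  show "card {x. x ^ k = c} \<le> k"
    unfolding roots using card_poly_roots_bound[OF \<open>P \<noteq> 0\<close>] \<open>degree P = k\<close> by simp
qed

lemma power_eq_1_gcd_iff:
  fixes x :: "'a::field" and a b :: nat
  assumes "a > 0"
  shows "x ^ a = 1 \<and> x ^ b = 1 \<longleftrightarrow> x ^ gcd a b = 1"
proof
  assume "x ^ a = 1 \<and> x ^ b = 1"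
  then have xa: "x ^ a = 1" and xb: "x ^ b = 1" by auto
  obtain u v where uv: "a * u = b * v + gcd a b"
    using bezout_nat[of a b] assms by auto
  have "1 = (x ^ a) ^ u" using xa by simp
  also have "\<dots> = (x ^ b) ^ v * x ^ gcd a b"
    by (simp add: uv power_add flip: power_mult)
  finally show "x ^ gcd a b = 1" using xb by simp
next
  assume "x ^ gcd a b = 1"
  then show "x ^ a = 1 \<and> x ^ b = 1"
    by (metis gcd_dvd1 gcd_dvd2 dvdE power_mult power_one)
qed

text \<open>
  The fibres of \<open>x \<mapsto> x ^ k\<close> on \<open>\<bbbF>\<^sub>q\<^sup>*\<close> have at most \<open>k\<close> elements and its image lies
  among the at most \<open>m\<close> roots of \<open>y ^ m = 1\<close>; since \<open>k m = q - 1\<close>, both bounds are attained.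
\<close>
lemma power_image_nonzero:
  fixes k :: nat
  assumes "k > 0" and "k dvd CARD('a::{field,finite}) - 1"
  defines "m \<equiv> (CARD('a) - 1) div k"
  shows "(\<lambda>x::'a. x ^ k) ` (UNIV - {0}) = {y. y ^ m = 1}"
    and "card {y::'a. y ^ m = 1} = m"
proof -
  define P where "P = (\<lambda>x::'a. x ^ k) ` (UNIV - {0})"
  have km: "k * m = CARD('a) - 1"
    using assms(2) by (simp add: m_def)
  have "(x ^ k) ^ m = 1" if "x \<noteq> 0" for x :: 'a
    using finite_field_power_card_minus_1[OF that] by (simp add: km flip: power_mult)
  then have sub: "P \<subseteq> {y. y ^ m = 1}"
    by (auto simp: P_def)
  have "m > 0"
    using km card_field_ge_2[where 'a='a] by (cases m) auto
  have "CARD('a) - 1 = card (UNIV - {0::'a})"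
    by (simp add: card_Diff_subset)
  also have "\<dots> = (\<Sum>y\<in>P. card {x \<in> UNIV - {0}. x ^ k = y})"
    unfolding P_def card_eq_sum by (rule sum.image_gen) simp
  also have "\<dots> \<le> (\<Sum>y\<in>P. k)"
    by (intro sum_mono order.trans[OF card_mono card_power_eq_le(2)])
       (auto intro: card_power_eq_le(1) \<open>k > 0\<close>)
  also have "\<dots> = k * card P" by simp
  finally have "k * m \<le> k * card P"
    using km by simp
  then have "m \<le> card P"
    using \<open>k > 0\<close> by simp
  moreover have "card P \<le> card {y::'a. y ^ m = 1}"
    using card_mono[OF finite sub] .
  moreover have "card {y::'a. y ^ m = 1} \<le> m"
    using card_power_eq_le(2)[OF \<open>m > 0\<close>] .
  ultimately show card: "card {y::'a. y ^ m = 1} = m"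
    by linarith
  show "P = {y. y ^ m = 1}"
    using card_subset_eq[OF finite sub] card \<open>m \<le> card P\<close> \<open>card P \<le> card {y::'a. y ^ m = 1}\<close>
    by linarith
qed

lemma card_roots_of_unity:
  fixes k :: nat
  assumes "k > 0" and "k dvd CARD('a::{field,finite}) - 1"
  shows "card {x::'a. x ^ k = 1} = k"
proof -
  obtain k' where k': "CARD('a) - 1 = k * k'"
    using assms(2) by blast
  moreover have "k' > 0"
    using k' card_field_ge_2[where 'a='a] by (cases "k' = 0") auto
  ultimately have "k' dvd CARD('a) - 1" "(CARD('a) - 1) div k' = k"
    by auto
  then show ?thesis
    using power_image_nonzero(2)[where 'a='a, of k'] \<open>k' > 0\<close> by simp
qed

lemma bij_betw_power_primitive_root:
  fixes \<theta> :: "'a::field"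
  assumes "n > 0" and "\<theta> ^ n = 1" and "\<And>k. 0 < k \<Longrightarrow> k < n \<Longrightarrow> \<theta> ^ k \<noteq> 1"
  shows "bij_betw (\<lambda>i. \<theta> ^ i) {..<n} {x. x ^ n = 1}"
proof -
  have "\<theta> \<noteq> 0"
    using assms(1,2) by (auto simp: power_0_left)
  have inj: "inj_on (\<lambda>i. \<theta> ^ i) {..<n}"
  proof (rule linorder_inj_onI')
    fix i j assume "i \<in> {..<n}" "j \<in> {..<n}" "i < j"
    then have "\<theta> ^ (j - i) \<noteq> 1"
      using assms(3) by simp
    moreover have "\<theta> ^ j = \<theta> ^ i * \<theta> ^ (j - i)"
      using \<open>i < j\<close> by (simp flip: power_add)
    ultimately show "\<theta> ^ i \<noteq> \<theta> ^ j"
      using \<open>\<theta> \<noteq> 0\<close> by auto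
  qed
  have "(\<theta> ^ i) ^ n = 1" for i
    using assms(2) by (metis power_mult mult.commute power_one)
  then have sub: "(\<lambda>i. \<theta> ^ i) ` {..<n} \<subseteq> {x. x ^ n = 1}"
    by auto
  have "card {x::'a. x ^ n = 1} \<le> card ((\<lambda>i. \<theta> ^ i) ` {..<n})"
    using card_power_eq_le(2)[OF assms(1)] inj by (simp add: card_image)
  then have "(\<lambda>i. \<theta> ^ i) ` {..<n} = {x. x ^ n = 1}"
    using card_seteq[OF card_power_eq_le(1)[OF assms(1)] sub] by blast
  with inj show ?thesis
    unfolding bij_betw_def by blast
qed

section \<open>Products of two groups of roots of unity\<close>

lemma sum_const_fibres:
  assumes "finite A" and "\<And>y. y \<in> g ` A \<Longrightarrow> card {x \<in> A. g x = y} = d"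
  shows "(\<Sum>x\<in>A. f (g x)) = of_nat d * (\<Sum>y\<in>g ` A. f y)"
proof -
  have "(\<Sum>x\<in>A. f (g x)) = (\<Sum>y\<in>g ` A. \<Sum>x\<in>{x \<in> A. g x = y}. f (g x))"
    by (rule sum.image_gen[OF assms(1)])
  also have "\<dots> = (\<Sum>y\<in>g ` A. of_nat d * f y)"
    using assms(2) by (intro sum.cong) auto
  finally show ?thesis
    by (simp add: sum_distrib_left)
qed

lemma card_mult_fibre_roots_of_unity:
  fixes l0 t0 :: "'a::field"
  assumes "a > 0" "b > 0" "l0 ^ a = 1" "t0 ^ b = 1"
  shows "card {z \<in> {l. l ^ a = 1} \<times> {t. t ^ b = 1}. fst z * snd z = l0 * t0}
           = card {s::'a. s ^ a = 1 \<and> s ^ b = 1}"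
proof -
  have nonzero: "x \<noteq> 0" if "x ^ k = 1" "k > 0" for x :: 'a and k
    using that by (auto simp: power_0_left)
  have "bij_betw (\<lambda>s. (l0 * s, t0 / s)) {s. s ^ a = 1 \<and> s ^ b = 1}
          {z \<in> {l. l ^ a = 1} \<times> {t. t ^ b = 1}. fst z * snd z = l0 * t0}"
  proof (rule bij_betw_byWitness[where f' = "\<lambda>z. fst z / l0"])
    show "(\<lambda>s. (l0 * s, t0 / s)) ` {s. s ^ a = 1 \<and> s ^ b = 1}
            \<subseteq> {z \<in> {l. l ^ a = 1} \<times> {t. t ^ b = 1}. fst z * snd z = l0 * t0}"
      using assms nonzero by (auto simp: power_mult_distrib power_divide)
    show "(\<lambda>z. fst z / l0) ` {z \<in> {l. l ^ a = 1} \<times> {t. t ^ b = 1}. fst z * snd z = l0 * t0}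
            \<subseteq> {s. s ^ a = 1 \<and> s ^ b = 1}"
    proof clarsimp
      fix l t :: 'a
      assume "l ^ a = 1" "t ^ b = 1" "l * t = l0 * t0"
      moreover have "l / l0 = t0 / t"
        using \<open>l * t = l0 * t0\<close> nonzero assms \<open>t ^ b = 1\<close> by (auto simp: field_simps)
      moreover have "(l / l0) ^ a = 1" "(t0 / t) ^ b = 1"
        using assms \<open>l ^ a = 1\<close> \<open>t ^ b = 1\<close> by (simp_all add: power_divide)
      ultimately show "(l / l0) ^ a = 1 \<and> (l / l0) ^ b = 1"
        by simp
    qed
  qed (use assms nonzero in \<open>auto simp: field_simps\<close>)
  then show ?thesis
    by (simp add: bij_betw_same_card)
qed

lemma sum_mult_roots_of_unity:
  fixes f :: "'a::{field,finite} \<Rightarrow> 'b::comm_semiring_1"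
  assumes lcm: "lcm a b = CARD('a) - 1"
  shows "(\<Sum>l | l ^ a = 1. \<Sum>t | t ^ b = 1. f (l * t)) = of_nat (gcd a b) * (\<Sum>x\<in>UNIV - {0}. f x)"
proof -
  define A where "A = {l::'a. l ^ a = 1} \<times> {t::'a. t ^ b = 1}"
  define g where "g = (\<lambda>z::'a \<times> 'a. fst z * snd z)"
  have "lcm a b \<noteq> 0"
    using lcm card_field_ge_2[where 'a='a] by simp
  then have "a > 0" "b > 0"
    by (simp_all add: lcm_eq_0_iff)
  have "a dvd CARD('a) - 1" "b dvd CARD('a) - 1" "gcd a b dvd CARD('a) - 1"
    unfolding lcm[symmetric] by (simp_all add: dvd_trans[OF gcd_dvd1])
  have fibre: "card {z \<in> A. g z = y} = gcd a b" if y: "y \<in> g ` A" for y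
  proof -
    obtain z where "z \<in> A" "y = g z"
      using y by blast
    then have "card {z \<in> A. g z = y} = card {s::'a. s ^ a = 1 \<and> s ^ b = 1}"
      unfolding A_def g_def using card_mult_fibre_roots_of_unity \<open>a > 0\<close> \<open>b > 0\<close> by auto
    also have "\<dots> = gcd a b"
      using power_eq_1_gcd_iff[where 'a='a, OF \<open>a > 0\<close>] card_roots_of_unity[OF _ \<open>gcd a b dvd _\<close>] \<open>a > 0\<close>
      by simp
    finally show ?thesis .
  qed
  have "card A = gcd a b * card (g ` A)"
    using sum_const_fibres[of A g "gcd a b" "\<lambda>_. 1::nat", OF _ fibre] by (simp add: A_def)
  moreover have "card A = a * b"
    using card_roots_of_unity[OF \<open>a > 0\<close> \<open>a dvd _\<close>] card_roots_of_unity[OF \<open>b > 0\<close> \<open>b dvd _\<close>]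
    by (simp add: A_def card_cartesian_product)
  moreover have "a * b = gcd a b * (CARD('a) - 1)"
    unfolding lcm[symmetric] by (rule prod_gcd_lcm_nat)
  ultimately have "card (g ` A) = card (UNIV - {0::'a})"
    using \<open>a > 0\<close> by (simp add: card_Diff_subset)
  moreover have "g ` A \<subseteq> UNIV - {0}"
    using \<open>a > 0\<close> \<open>b > 0\<close> by (auto simp: A_def g_def power_0_left)
  ultimately have image: "g ` A = UNIV - {0}"
    by (intro card_subset_eq) auto
  have "(\<Sum>l | l ^ a = 1. \<Sum>t | t ^ b = 1. f (l * t)) = (\<Sum>z\<in>A. f (g z))"
    by (simp add: A_def g_def sum.cartesian_product case_prod_beta)
  also have "\<dots> = of_nat (gcd a b) * (\<Sum>x\<in>UNIV - {0}. f x)"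
    using sum_const_fibres[of A g, OF _ fibre] image by (simp add: A_def)
  finally show ?thesis .
qed

lemma diff_1_dvd_power_diff_1: "(x::nat) - 1 dvd x ^ n - 1"
proof (cases "x = 0")
  case False
  then have "[x ^ n = 1 ^ n] (mod x - 1)"
    by (intro cong_pow) (simp add: cong_def mod_if le_mod_geq)
  then show ?thesis
    by (metis cong_to_1_nat power_one)
qed (simp add: power_0_left)

lemma gcd_lcm_coprime_cofactor:
  fixes N r s :: nat
  assumes "N dvd r" and "r dvd s" and "coprime N (s div r)"
  shows "gcd r (s div N) = r div N" and "lcm r (s div N) = s"
proof -
  have "gcd r (s div N) = r div N \<and> lcm r (s div N) = s"
  proof (cases "r = 0")
    case False
    obtain d M where r: "r = N * d" and s: "s = r * M"
      using assms(1,2) unfolding dvd_def by blast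
    have "N \<noteq> 0" "d \<noteq> 0"
      using False r by auto
    then have "s div r = M" "s div N = d * M" and r': "r = d * N"
      using r s by auto
    then have "coprime N M"
      using assms(3) by simp
    then show ?thesis
      unfolding \<open>s div N = d * M\<close> r' using \<open>N \<noteq> 0\<close>
      by (simp add: gcd_mult_left lcm_mult_left lcm_coprime s r')
  qed (use assms(2) in auto)
  then show "gcd r (s div N) = r div N" and "lcm r (s div N) = s"
    by auto
qed

section \<open>The quadratic character\<close>

lemma one_neq_minus_one_if_odd_card:
  assumes "odd CARD('a::{field,finite})"
  shows "(1::'a) \<noteq> -1"
proof
  assume "(1::'a) = -1"
  then have "(2::'a) = 0"
    by (metis add.right_inverse one_add_one)
  then have "of_nat 2 = (0::'a)"
    by simp
  then have "CHAR('a) dvd 2"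
    by (simp only: of_nat_eq_0_iff_char_dvd)
  moreover have "\<not> 2 dvd CHAR('a)"
    using CHAR_dvd_CARD[where 'a='a] assms dvd_trans by blast
  ultimately have "CHAR('a) = 1"
    using prime_nat_iff[of 2] by auto
  then show False
    by simp
qed

lemma eta_Euler_criterion:
  fixes x :: "'a::{field,finite}"
  assumes "odd CARD('a)" and "x \<noteq> 0"
  shows "eta x = (if x ^ ((CARD('a) - 1) div 2) = 1 then 1 else -1)"
proof -
  have "(\<exists>y. y ^ 2 = x) \<longleftrightarrow> x \<in> (\<lambda>y. y ^ 2) ` (UNIV - {0})"
    using assms(2) by auto
  also have "\<dots> \<longleftrightarrow> x ^ ((CARD('a) - 1) div 2) = 1"
    using power_image_nonzero(1)[of 2, where 'a='a] assms(1) by auto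
  finally show ?thesis
    using assms(2) by (simp add: eta_def)
qed

lemma power_half_card_eq_1_or_minus_1:
  fixes x :: "'a::{field,finite}"
  assumes "odd CARD('a)" and "x \<noteq> 0"
  shows "x ^ ((CARD('a) - 1) div 2) = 1 \<or> x ^ ((CARD('a) - 1) div 2) = -1"
proof -
  have "(x ^ ((CARD('a) - 1) div 2)) ^ 2 = x ^ (CARD('a) - 1)"
    using assms(1) by (simp flip: power_mult)
  then show ?thesis
    using finite_field_power_card_minus_1[OF assms(2)] by (simp add: power2_eq_1_iff)
qed

lemma eta_mult:
  fixes x y :: "'a::{field,finite}"
  assumes "odd CARD('a)"
  shows "eta (x * y) = eta x * eta y"
proof (cases "x = 0 \<or> y = 0")
  case False
  define h where "h = (CARD('a) - 1) div 2"
  have "x ^ h = 1 \<or> x ^ h = -1" "y ^ h = 1 \<or> y ^ h = -1"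
    using power_half_card_eq_1_or_minus_1[OF assms] False by (auto simp: h_def)
  moreover have "eta z = (if z ^ h = 1 then 1 else -1)" if "z \<noteq> 0" for z :: 'a
    using eta_Euler_criterion[OF assms that] by (simp add: h_def)
  ultimately show ?thesis
    using False one_neq_minus_one_if_odd_card[OF assms]
    by (auto simp: power_mult_distrib)
qed (auto simp: eta_def)

lemma sum_rescale_eta_twisted:
  fixes g :: "'a::{field,finite} \<Rightarrow> complex"
  assumes "odd CARD('a)" and "c \<noteq> 0"
  shows "(\<Sum>x\<in>UNIV - {0}. g (c * x) * eta (a * x)) = eta (a * c) * (\<Sum>x\<in>UNIV - {0}. g x * eta x)"
proof -
  have "eta (inverse c ^ 2) = 1"
    using assms(2) by (auto simp: eta_def)
  moreover have "a * (y / c) = (a * c) * y * inverse c ^ 2" for y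
    using assms(2) by (simp add: field_simps power2_eq_square)
  ultimately have eta_shift: "eta (a * (y / c)) = eta (a * c) * eta y" for y
    using assms(1) by (simp add: eta_mult)
  have "(\<Sum>x\<in>UNIV - {0}. g (c * x) * eta (a * x)) = (\<Sum>y\<in>UNIV - {0}. g y * eta (a * (y / c)))"
    by (rule sum.reindex_bij_witness[of _ "\<lambda>y. y / c" "\<lambda>x. c * x"]) (use assms(2) in auto)
  also have "\<dots> = eta (a * c) * (\<Sum>x\<in>UNIV - {0}. g x * eta x)"
    by (simp only: eta_shift) (simp add: sum_distrib_left mult_ac)
  finally show ?thesis .
qed

section \<open>The canonical additive character\<close>

lemma sum_additive_character_eq_0:
  fixes \<psi> :: "'a::{ab_group_add,finite} \<Rightarrow> 'b::idom"
  assumes hom: "\<And>x y. \<psi> (x + y) = \<psi> x * \<psi> y" and "\<psi> a \<noteq> 1"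
  shows "(\<Sum>x\<in>UNIV. \<psi> x) = 0"
proof -
  have "(\<Sum>x\<in>UNIV. \<psi> x) = (\<Sum>x\<in>UNIV. \<psi> (x + a))"
    by (rule sum.reindex_bij_witness[of _ "\<lambda>y. y + a" "\<lambda>y. y - a"]) auto
  also have "\<dots> = (\<Sum>x\<in>UNIV. \<psi> x) * \<psi> a"
    by (simp add: hom sum_distrib_right)
  finally have "(\<Sum>x\<in>UNIV. \<psi> x) * (\<psi> a - 1) = 0"
    by (simp add: algebra_simps)
  with assms(2) show ?thesis
    by simp
qed

context
  fixes p m :: nat
  assumes prime: "prime p" and card: "CARD('a::{field,finite}) = p ^ m"
begin

lemma CHAR_eq_p: "CHAR('a) = p"
proof -
  have "prime CHAR('a)"
    by (intro prime_CHAR_semidom finite_imp_CHAR_pos) auto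
  moreover have "CHAR('a) dvd p ^ m"
    using CHAR_dvd_CARD[where 'a='a] card by simp
  ultimately show ?thesis
    using prime by (metis prime_dvd_power primes_dvd_imp_eq)
qed

lemma of_nat_eq_iff_cong_p: "(of_nat i :: 'a) = of_nat j \<longleftrightarrow> [i = j] (mod p)"
  using of_nat_eq_iff_cong_CHAR[where 'a='a] CHAR_eq_p by simp

lemma prime_field_units_eq: "of_nat ` {1..<p} = {x::'a. x ^ (p - 1) = 1}"
proof (rule card_subset_eq)
  show "of_nat ` {1..<p} \<subseteq> {x::'a. x ^ (p - 1) = 1}"
  proof
    fix x assume "x \<in> (of_nat ` {1..<p} :: 'a set)"
    then obtain k where "1 \<le> k" "k < p" "x = of_nat k"
      by auto
    then have "\<not> p dvd k"
      by (auto dest: dvd_imp_le)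
    then have "[k ^ (p - 1) = 1] (mod p)"
      by (rule fermat_theorem[OF prime])
    then show "x \<in> {x. x ^ (p - 1) = 1}"
      using of_nat_eq_iff_cong_p[of "k ^ (p - 1)" 1] \<open>x = of_nat k\<close> by simp
  qed
  have "inj_on (of_nat :: nat \<Rightarrow> 'a) {1..<p}"
    by (auto simp: inj_on_def of_nat_eq_iff_cong_p cong_def)
  then have "card (of_nat ` {1..<p} :: 'a set) = p - 1"
    by (simp add: card_image)
  moreover have "card {x::'a. x ^ (p - 1) = 1} \<le> p - 1"
    using card_power_eq_le(2)[where 'a='a, of "p - 1" 1] prime_gt_1_nat[OF prime] by simp
  ultimately show "card (of_nat ` {1..<p} :: 'a set) = card {x::'a. x ^ (p - 1) = 1}"
    using card_mono[OF finite \<open>of_nat ` {1..<p} \<subseteq> _\<close>] by simp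
qed simp

lemma prime_field_eq: "{y::'a. y ^ p = y} = of_nat ` {..<p}"
proof -
  have p: "p = Suc (p - 1)"
    using prime_gt_1_nat[OF prime] by simp
  have "y ^ p = y \<longleftrightarrow> y = 0 \<or> y ^ (p - 1) = 1" for y :: 'a
    by (subst p, subst power_Suc) auto
  moreover have "{..<p} = insert 0 {1..<p}"
    using prime_gt_1_nat[OF prime] by auto
  ultimately show ?thesis
    using prime_field_units_eq by auto
qed

lemma zeta_pow_of_nat: "zeta_pow p (of_nat k :: 'a) = cis (2 * pi / p) ^ k"
proof -
  have "p > 0"
    using prime_gt_0_nat[OF prime] .
  have "Fp_rep p (of_nat k :: 'a) = k mod p"
    unfolding Fp_rep_def
    by (rule the_equality) (auto simp: of_nat_eq_iff_cong_p cong_def \<open>p > 0\<close>)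
  then have "zeta_pow p (of_nat k :: 'a) = cis (2 * pi * real (k mod p) / real p)"
    by (simp add: zeta_pow_def cis_conv_exp mult_ac)
  also have "\<dots> = cis (2 * pi / p) ^ (k mod p)"
    by (simp add: DeMoivre mult_ac)
  also have "\<dots> = cis (2 * pi / p) ^ k"
  proof -
    have "cis (2 * pi / p) ^ p = 1"
      using \<open>p > 0\<close> by (simp add: DeMoivre)
    then show ?thesis
      by (metis div_mult_mod_eq power_add power_mult mult.commute power_one mult_1)
  qed
  finally show ?thesis .
qed

lemma zeta_pow_prime_field_add:
  assumes "x \<in> range of_nat" and "y \<in> range of_nat"
  shows "zeta_pow p (x + y :: 'a) = zeta_pow p x * zeta_pow p y"
  using assms by (auto simp: zeta_pow_of_nat power_add simp flip: of_nat_add)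

lemma zeta_pow_of_nat_neq_1:
  assumes "0 < k" and "k < p"
  shows "zeta_pow p (of_nat k :: 'a) \<noteq> 1"
proof
  assume "zeta_pow p (of_nat k :: 'a) = 1"
  then have eq: "cis (2 * pi * real k / real p) = cis (2 * pi * real 0 / real p)"
    by (simp add: zeta_pow_of_nat DeMoivre mult_ac)
  have inj: "inj_on (\<lambda>k. cis (2 * pi * real k / real p)) {..<p}"
    using bij_betw_roots_unity[of p] assms by (simp add: bij_betw_def)
  have "k = 0"
    using inj_onD[OF inj eq] assms by simp
  with assms(1) show False
    by simp
qed

lemma trace_qp_add: "trace_qp p m (x + y :: 'a) = trace_qp p m x + trace_qp p m y"
  unfolding trace_qp_def sum.distrib[symmetric]
  by (rule sum.cong[OF refl], rule freshmans_dream') (simp_all add: CHAR_eq_p prime)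

lemma trace_qp_in_prime_field: "trace_qp p m (x :: 'a) \<in> of_nat ` {..<p}"
proof -
  define g where "g j = x ^ (p ^ j)" for j
  have "g m = g 0"
    using finite_field_power_card[of x] by (simp add: g_def card)
  have "trace_qp p m x ^ p = (\<Sum>j<m. g (Suc j))"
    unfolding trace_qp_def g_def
    by (subst freshmans_dream_sum) (simp_all add: CHAR_eq_p prime power_mult[symmetric] mult.commute)
  also have "\<dots> = (\<Sum>j<m. g j)"
    using sum.lessThan_Suc_shift[of g m] \<open>g m = g 0\<close> by simp
  finally have "trace_qp p m x ^ p = trace_qp p m x"
    by (simp add: trace_qp_def g_def)
  then show ?thesis
    using prime_field_eq by blast
qed

lemma trace_qp_nonzero: "\<exists>a::'a. trace_qp p m a \<noteq> 0"
proof (rule ccontr)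
  assume "\<not> ?thesis"
  define P :: "'a poly" where "P = (\<Sum>j<m. monom 1 (p ^ j))"
  have "poly P x = trace_qp p m x" for x
    by (simp add: P_def trace_qp_def poly_sum poly_monom)
  with \<open>\<not> ?thesis\<close> have "{x. poly P x = 0} = UNIV"
    by auto
  have "m \<ge> 1"
    using card card_field_ge_2[where 'a='a] by (cases m) auto
  have "coeff P (p ^ (m - 1)) = (\<Sum>j<m. if j = m - 1 then 1 else 0)"
    unfolding P_def coeff_sum coeff_monom
    by (rule sum.cong[OF refl]) (use prime_gt_1_nat[OF prime] in auto)
  also have "\<dots> = 1"
    using \<open>m \<ge> 1\<close> by simp
  finally have "P \<noteq> 0"
    by auto
  have "degree P \<le> p ^ (m - 1)"
    unfolding P_def
  proof (rule degree_sum_le)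
    fix j assume "j \<in> {..<m}"
    then have "p ^ j \<le> p ^ (m - 1)"
      using prime_gt_1_nat[OF prime] by (intro power_increasing) auto
    then show "degree (monom (1::'a) (p ^ j)) \<le> p ^ (m - 1)"
      using degree_monom_le le_trans by blast
  qed simp
  also have "p ^ (m - 1) < CARD('a)"
    unfolding card using prime_gt_1_nat[OF prime] \<open>m \<ge> 1\<close> by (intro power_strict_increasing) auto
  finally show False
    using card_poly_roots_bound[OF \<open>P \<noteq> 0\<close>] \<open>{x. poly P x = 0} = UNIV\<close> by simp
qed

lemma zeta_trace_add:
  "zeta_pow p (trace_qp p m (x + y :: 'a)) = zeta_pow p (trace_qp p m x) * zeta_pow p (trace_qp p m y)"
  unfolding trace_qp_add using trace_qp_in_prime_field by (intro zeta_pow_prime_field_add) auto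

lemma zeta_trace_nontrivial: "\<exists>a::'a. zeta_pow p (trace_qp p m a) \<noteq> 1"
proof -
  obtain a :: 'a where "trace_qp p m a \<noteq> 0"
    using trace_qp_nonzero by blast
  moreover obtain k where "k < p" "trace_qp p m a = of_nat k"
    using trace_qp_in_prime_field[of a] by auto
  ultimately have "zeta_pow p (trace_qp p m a) \<noteq> 1"
    using zeta_pow_of_nat_neq_1[of k] by (cases "k = 0") auto
  then show ?thesis
    by blast
qed

lemma sum_zeta_trace_scaled_nonzero:
  assumes "c \<noteq> 0"
  shows "(\<Sum>x\<in>UNIV - {0}. zeta_pow p (trace_qp p m (c * x :: 'a))) = -1"
proof -
  obtain a :: 'a where "zeta_pow p (trace_qp p m a) \<noteq> 1"
    using zeta_trace_nontrivial by blast
  then have "(\<Sum>x\<in>UNIV. zeta_pow p (trace_qp p m (c * x))) = 0"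
    using assms
    by (intro sum_additive_character_eq_0[of _ "a / c"]) (simp_all add: distrib_left zeta_trace_add)
  moreover have "zeta_pow p (trace_qp p m (c * 0)) = 1"
    using zeta_pow_of_nat[of 0] prime_gt_0_nat[OF prime] by (simp add: trace_qp_def power_0_left)
  ultimately show ?thesis
    using sum.remove[of UNIV 0 "\<lambda>x. zeta_pow p (trace_qp p m (c * x))"]
    by (simp add: eq_neg_iff_add_eq_0 add.commute)
qed

lemma sum_prime_field_units_times_cyclic:
  fixes N :: nat and \<theta> :: 'a and f :: "'a \<Rightarrow> 'b::comm_semiring_1"
  defines "n \<equiv> (CARD('a) - 1) div N"
  assumes "N dvd p - 1" and "coprime N ((CARD('a) - 1) div (p - 1))"
    and "\<theta> ^ n = 1" and "\<And>k. 0 < k \<Longrightarrow> k < n \<Longrightarrow> \<theta> ^ k \<noteq> 1"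
  shows "(\<Sum>l\<in>of_nat ` {1..<p}. \<Sum>i<n. f (l * \<theta> ^ i)) = of_nat ((p - 1) div N) * (\<Sum>x\<in>UNIV - {0}. f x)"
proof -
  have "p - 1 dvd CARD('a) - 1"
    unfolding card by (rule diff_1_dvd_power_diff_1)
  then have gcd: "gcd (p - 1) n = (p - 1) div N" and lcm: "lcm (p - 1) n = CARD('a) - 1"
    unfolding n_def using gcd_lcm_coprime_cofactor assms(2,3) by blast+
  then have "n > 0"
    using card_field_ge_2[where 'a='a] by (cases n) auto
  have "(\<Sum>i<n. f (l * \<theta> ^ i)) = (\<Sum>t | t ^ n = 1. f (l * t))" for l
    using sum.reindex_bij_betw[OF bij_betw_power_primitive_root[OF \<open>n > 0\<close> assms(4,5)]] .
  then have "(\<Sum>l\<in>of_nat ` {1..<p}. \<Sum>i<n. f (l * \<theta> ^ i)) = (\<Sum>l | l ^ (p - 1) = 1. \<Sum>t | t ^ n = 1. f (l * t))"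
    unfolding prime_field_units_eq by simp
  also have "\<dots> = of_nat ((p - 1) div N) * (\<Sum>x\<in>UNIV - {0}. f x)"
    using sum_mult_roots_of_unity[OF lcm] gcd by simp
  finally show ?thesis .
qed

end

theorem corollary3:
  fixes p m N :: nat and \<theta> :: "'a::{field,finite}"
  assumes "prime p" and "odd p" and "m \<ge> 1"
    and "CARD('a) = p ^ m"
    and "N > 0" and "N dvd (p - 1)"
    and "coprime N ((CARD('a) - 1) div (p - 1))"
    and "\<theta> ^ ((CARD('a) - 1) div N) = 1"
    and "\<forall>k. 0 < k \<and> k < (CARD('a) - 1) div N \<longrightarrow> \<theta> ^ k \<noteq> 1"
  shows "\<forall>c::'a. c \<noteq> 0 \<longrightarrow>
      (\<Sum>l\<in>of_nat ` {1..<p}. \<Sum>i<(CARD('a) - 1) div N.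
          zeta_pow p (trace_qp p m (l * c * \<theta> ^ i)))
        = - (of_nat (p - 1) / of_nat N)
    \<and> (\<forall>a::'a.
      (\<Sum>l\<in>of_nat ` {1..<p}. \<Sum>i<(CARD('a) - 1) div N.
          zeta_pow p (trace_qp p m (l * c * \<theta> ^ i)) * eta (l * a * \<theta> ^ i))
        = of_nat (p - 1) / of_nat N * eta (a * c) *
          (\<Sum>x\<in>UNIV - {0::'a}. zeta_pow p (trace_qp p m x) * eta x))"
proof (intro allI impI conjI)
  fix c a :: 'a
  assume "c \<noteq> 0"
  have "\<And>k. 0 < k \<Longrightarrow> k < (CARD('a) - 1) div N \<Longrightarrow> \<theta> ^ k \<noteq> 1"
    using assms(9) by blast
  note sum_eq = sum_prime_field_units_times_cyclic[OF assms(1,4,6,7,8) this]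
  have ratio: "of_nat (p - 1) / of_nat N = (of_nat ((p - 1) div N) :: complex)"
    using assms(6) by (simp add: of_nat_of_nat_div)
  have "odd CARD('a)"
    using assms(2,4) by simp
  show "(\<Sum>l\<in>of_nat ` {1..<p}. \<Sum>i<(CARD('a) - 1) div N. zeta_pow p (trace_qp p m (l * c * \<theta> ^ i)))
      = - (of_nat (p - 1) / of_nat N)"
    using sum_eq[of "\<lambda>x. zeta_pow p (trace_qp p m (c * x))"] ratio
      sum_zeta_trace_scaled_nonzero[OF assms(1,4) \<open>c \<noteq> 0\<close>]
    by (simp add: mult_ac)
  show "(\<Sum>l\<in>of_nat ` {1..<p}. \<Sum>i<(CARD('a) - 1) div N.
          zeta_pow p (trace_qp p m (l * c * \<theta> ^ i)) * eta (l * a * \<theta> ^ i))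
        = of_nat (p - 1) / of_nat N * eta (a * c) *
          (\<Sum>x\<in>UNIV - {0::'a}. zeta_pow p (trace_qp p m x) * eta x)"
    using sum_eq[of "\<lambda>x. zeta_pow p (trace_qp p m (c * x)) * eta (a * x)"] ratio
      sum_rescale_eta_twisted[where g = "\<lambda>x. zeta_pow p (trace_qp p m x)" and a = a,
        OF \<open>odd CARD('a)\<close> \<open>c \<noteq> 0\<close>]
    by (simp add: mult_ac)
qed

end
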